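(* Let $E$ be a real Banach space, $K\subset E$ nonempty closed convex, $Y$ a real Banach space containing a closed, convex, pointed cone $C$ with nonempty interior, $f:E\times E\to Y$, $T:K\to\mathcal P(K)$, and $g\in\mathcal F$ satisfying H1–H4, with B1–B4 holding. If Algorithm SEML stops at the $k$-th iteration (i.e. $z^k=v^k$), then $x^k$ is a solution of the vector quasi-equilibrium problem, i.e. $x^k\in T(x^k)$ and $f(x^k,y)\notin-\mathrm{int}(C)$ for all $y\in T(x^k)$.
   Context: $C^+=\{z\in Y^*:\langle y,z\rangle\ge0\ \forall y\in C\}$; $y\preceq y'$ iff $y'-y\in C$; $C$-convex: $G(tx+(1-t)y)\preceq tG(x)+(1-t)G(y)$. $\mathcal F$: functions $g:E\to\mathbb R$ strictly convex, lower semicontinuous, Gâteaux differentiable with derivative $g'$. $D_g(x,y)=g(x)-g(y)-\langle x-y,g'(y)\rangle$; $v_g(x,t)=\inf\{D_g(y,x):\|y-x\|=t\}$. H1: level sets of $D_g(x,\cdot)$ bounded; H2: $\inf_{x\in A}v_g(x,t)>0$ for $t>0$, bounded $A$; H3: $g'$ uniformly continuous on bounded sets; H4: $\lim_{\|x\|\to\infty}(g(x)-\rho\|x-z\|)=\infty$ for all $z$, $\rho>0$. $\Pi^g_D(x)$: unique minimizer of $D_g(\cdot,x)$ over nonempty closed convex $D$. B1: $f(x,x)=0$. B2: $f$ uniformly continuous on bounded subsets of $E\times E$. B3: $f(x,\cdot)$ $C$-convex. B4: $T$ has nonempty closed convex values, is demiclosed, lower semicontinuous at each point of $K$, and quasi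 $D_g$-nonexpansive (definitions: demiclosed means $x^k\rightharpoonup\bar x$, $d(x^k,T(x^k))\to0\Rightarrow\bar x\in T(\bar x)$; lower semicontinuous at $\bar x$ means $x^k\to\bar x$, $\bar y\in T(\bar x)\Rightarrow\exists y^k\in T(x^k)$ with $y^k\to\bar y$; quasi $D_g$-nonexpansive means $S(x)=\Pi^g_{T(x)}(x)$ has a fixed point and $D_g(p,S(x))\le D_g(p,x)$ for fixed points $p$ of $S$, $x\in K$). $\mathrm{argmin}^C_w\{G(y):y\in Q\}$: $a\in Q$ with no $y\in Q$ such that $G(a)-G(y)\in\mathrm{int}(C)$. Algorithm SEML: parameters $v^0\in K$, $\delta,\theta\in(0,1)$, $\{\beta_k\}\subset[\hat\beta,\tilde\beta]$ with $0<\hat\beta\le\tilde\beta$, $\{\gamma_k\}\subset[\varepsilon,1]$, $\varepsilon\in(0,1]$, $\{e^k\}\subset\mathrm{int}(C)$, $e^k\to\bar e\in\mathrm{int}(C)$. Given $v^k$: $x^k=\Pi^g_{T(v^k)}(v^k)$; $z^k\in\mathrm{argmin}^C_w\{\beta_kf(x^k,y)+g(y)e^k-\langle y,g'(x^k)\rangle e^k:y\in T(v^k)\}$; stop if $z^k=v^k$; else $\ell(k)=\min\{\ell\ge0:-\beta_kf(y^\ell,x^k)+\beta_kf(y^\ell,z^k)+\delta D_g(z^k,x^k)e^k\notin\mathrm{int}(C)\}$, $y^\ell=\theta^\ell z^k+(1-\theta^\ell)x^k$; $\alpha_k=\theta^{\ell(k)}$; $y^k=\alpha_kz^k+(1-\alpha_k)x^k$;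 $H_k=\{y:f(y^k,y)\in-C\}$; $K_0=K\cap H_0$, $K_k=K_{k-1}\cap H_k$; $w^k=\Pi^g_{K_k}(x^k)$; $v^{k+1}=\Pi^g_{L_k\cap M_k\cap N_k}(v^0)$ with $L_k=\{z:\langle z-x^k,g'(x^k)-g'(w^k)\rangle\le-\gamma_kD_g(x^k,w^k)\}$, $M_k=\{z:\langle z-v^k,g'(v^k)-g'(x^k)\rangle\le-\gamma_kD_g(v^k,x^k)\}$, $N_k=\{z:\langle z-v^k,g'(v^0)-g'(v^k)\rangle\le0\}$. *)

theory Defs
  imports "HOL-Analysis.Analysis"
begin

text \<open>Dual pairing: elements of E* are modelled as bounded linear functionals
  'e \<Rightarrow>L real; the pairing is blinfun_apply.\<close>

definition strictly_convex :: "('e::real_vector \<Rightarrow> real) \<Rightarrow> bool" where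
  "strictly_convex g \<longleftrightarrow>
     (\<forall>x y t. x \<noteq> y \<and> 0 < t \<and> t < 1 \<longrightarrow>
        g (t *\<^sub>R x + (1 - t) *\<^sub>R y) < t * g x + (1 - t) * g y)"

definition lsc :: "('e::topological_space \<Rightarrow> real) \<Rightarrow> bool" where
  "lsc g \<longleftrightarrow> (\<forall>a. closed {x. g x \<le> a})"

definition gateaux_deriv :: "('e::real_normed_vector \<Rightarrow> real) \<Rightarrow> ('e \<Rightarrow> ('e \<Rightarrow>\<^sub>L real)) \<Rightarrow> bool" where
  "gateaux_deriv g g' \<longleftrightarrow>
     (\<forall>x h. ((\<lambda>t. (g (x + t *\<^sub>R h) - g x) / t) \<longlongrightarrow> blinfun_apply (g' x) h) (at 0))"

definition class_F :: "('e::real_normed_vector \<Rightarrow> real) \<Rightarrow> ('e \<Rightarrow> ('e \<Rightarrow>\<^sub>L real)) \<Rightarrow> bool" where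
  "class_F g g' \<longleftrightarrow> strictly_convex g \<and> lsc g \<and> gateaux_deriv g g'"

definition Dg :: "('e::real_normed_vector \<Rightarrow> real) \<Rightarrow> ('e \<Rightarrow> ('e \<Rightarrow>\<^sub>L real)) \<Rightarrow> 'e \<Rightarrow> 'e \<Rightarrow> real" where
  "Dg g g' x y = g x - g y - blinfun_apply (g' y) (x - y)"

text \<open>Modulus of total convexity v_g(x,t), as an extended real (inf of the empty set is +\<infinity>).\<close>
definition vg :: "('e::real_normed_vector \<Rightarrow> real) \<Rightarrow> ('e \<Rightarrow> ('e \<Rightarrow>\<^sub>L real)) \<Rightarrow> 'e \<Rightarrow> real \<Rightarrow> ereal" where
  "vg g g' x t = (INF y\<in>{y. norm (y - x) = t}. ereal (Dg g g' y x))"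

definition H1 :: "('e::real_normed_vector \<Rightarrow> real) \<Rightarrow> ('e \<Rightarrow> ('e \<Rightarrow>\<^sub>L real)) \<Rightarrow> bool" where
  "H1 g g' \<longleftrightarrow> (\<forall>x r. bounded {y. Dg g g' x y \<le> r})"

definition H2 :: "('e::real_normed_vector \<Rightarrow> real) \<Rightarrow> ('e \<Rightarrow> ('e \<Rightarrow>\<^sub>L real)) \<Rightarrow> bool" where
  "H2 g g' \<longleftrightarrow> (\<forall>A t. bounded A \<and> t > 0 \<longrightarrow> (INF x\<in>A. vg g g' x t) > 0)"

definition H3 :: "('e::real_normed_vector \<Rightarrow> ('e \<Rightarrow>\<^sub>L real)) \<Rightarrow> bool" where
  "H3 g' \<longleftrightarrow> (\<forall>A. bounded A \<longrightarrow> uniformly_continuous_on A g')"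

definition H4 :: "('e::real_normed_vector \<Rightarrow> real) \<Rightarrow> bool" where
  "H4 g \<longleftrightarrow> (\<forall>z \<rho>. \<rho> > 0 \<longrightarrow> filterlim (\<lambda>x. g x - \<rho> * norm (x - z)) at_top at_infinity)"

definition is_bproj :: "('e::real_normed_vector \<Rightarrow> real) \<Rightarrow> ('e \<Rightarrow> ('e \<Rightarrow>\<^sub>L real)) \<Rightarrow> 'e set \<Rightarrow> 'e \<Rightarrow> 'e \<Rightarrow> bool" where
  "is_bproj g g' D x p \<longleftrightarrow> p \<in> D \<and> (\<forall>y\<in>D. Dg g g' p x \<le> Dg g g' y x)"

definition proper_cone :: "'y::real_normed_vector set \<Rightarrow> bool" where
  "proper_cone C \<longleftrightarrow> closed C \<and> convex C \<and> cone C \<and> C \<noteq> {} \<and>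
     (\<forall>c. c \<in> C \<and> - c \<in> C \<longrightarrow> c = 0) \<and> interior C \<noteq> {}"

text \<open>C-convexity: G(tx+(1-t)y) \<preceq> tG(x)+(1-t)G(y), where a \<preceq> b iff b - a \<in> C.\<close>
definition C_convex :: "'y::real_vector set \<Rightarrow> ('e::real_vector \<Rightarrow> 'y) \<Rightarrow> bool" where
  "C_convex C G \<longleftrightarrow> (\<forall>x y t. 0 \<le> t \<and> t \<le> 1 \<longrightarrow>
      (t *\<^sub>R G x + (1 - t) *\<^sub>R G y) - G (t *\<^sub>R x + (1 - t) *\<^sub>R y) \<in> C)"

definition weak_argmin :: "'y::real_normed_vector set \<Rightarrow> ('e \<Rightarrow> 'y) \<Rightarrow> 'e set \<Rightarrow> 'e \<Rightarrow> bool" where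
  "weak_argmin C G Q a \<longleftrightarrow> a \<in> Q \<and> \<not> (\<exists>y\<in>Q. G a - G y \<in> interior C)"

definition weak_conv :: "(nat \<Rightarrow> 'e::real_normed_vector) \<Rightarrow> 'e \<Rightarrow> bool" where
  "weak_conv xs x \<longleftrightarrow> (\<forall>\<phi>::'e \<Rightarrow>\<^sub>L real. (\<lambda>k. blinfun_apply \<phi> (xs k)) \<longlonglongrightarrow> blinfun_apply \<phi> x)"

definition B1 :: "('e \<Rightarrow> 'e \<Rightarrow> 'y::zero) \<Rightarrow> bool" where
  "B1 f \<longleftrightarrow> (\<forall>x. f x x = 0)"

definition B2 :: "('e::metric_space \<Rightarrow> 'e \<Rightarrow> 'y::metric_space) \<Rightarrow> bool" where
  "B2 f \<longleftrightarrow> (\<forall>A::('e \<times> 'e) set. bounded A \<longrightarrow> uniformly_continuous_on A (\<lambda>(x, y). f x y))"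

definition B3 :: "'y::real_vector set \<Rightarrow> ('e::real_vector \<Rightarrow> 'e \<Rightarrow> 'y) \<Rightarrow> bool" where
  "B3 C f \<longleftrightarrow> (\<forall>x. C_convex C (f x))"

definition demiclosed :: "'e::real_normed_vector set \<Rightarrow> ('e \<Rightarrow> 'e set) \<Rightarrow> bool" where
  "demiclosed K T \<longleftrightarrow> (\<forall>xs xbar. (\<forall>k. xs k \<in> K) \<and> weak_conv xs xbar \<and>
      (\<lambda>k. infdist (xs k) (T (xs k))) \<longlonglongrightarrow> 0 \<longrightarrow> xbar \<in> T xbar)"

definition lsc_setval_at :: "'e::real_normed_vector set \<Rightarrow> ('e \<Rightarrow> 'e set) \<Rightarrow> 'e \<Rightarrow> bool" where
  "lsc_setval_at K T xbar \<longleftrightarrow> (\<forall>xs ybar. (\<forall>k. xs k \<in> K) \<and> xs \<longlonglongrightarrow> xbar \<and> ybar \<in> T xbar \<longrightarrow>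
      (\<exists>ys. (\<forall>k. ys k \<in> T (xs k)) \<and> ys \<longlonglongrightarrow> ybar))"

definition quasi_Dg_nonexp :: "('e::real_normed_vector \<Rightarrow> real) \<Rightarrow> ('e \<Rightarrow> ('e \<Rightarrow>\<^sub>L real)) \<Rightarrow> 'e set \<Rightarrow> ('e \<Rightarrow> 'e set) \<Rightarrow> bool" where
  "quasi_Dg_nonexp g g' K T \<longleftrightarrow>
     (\<exists>p\<in>K. is_bproj g g' (T p) p p) \<and>
     (\<forall>p\<in>K. is_bproj g g' (T p) p p \<longrightarrow>
        (\<forall>x\<in>K. \<forall>s. is_bproj g g' (T x) x s \<longrightarrow> Dg g g' p s \<le> Dg g g' p x))"

definition B4 :: "('e::real_normed_vector \<Rightarrow> real) \<Rightarrow> ('e \<Rightarrow> ('e \<Rightarrow>\<^sub>L real)) \<Rightarrow> 'e set \<Rightarrow> ('e \<Rightarrow> 'e set) \<Rightarrow> bool" where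
  "B4 g g' K T \<longleftrightarrow>
     (\<forall>x\<in>K. T x \<noteq> {} \<and> closed (T x) \<and> convex (T x)) \<and>
     demiclosed K T \<and> (\<forall>x\<in>K. lsc_setval_at K T x) \<and> quasi_Dg_nonexp g g' K T"

definition SEML_params :: "'e set \<Rightarrow> 'y::real_normed_vector set \<Rightarrow> 'e \<Rightarrow> real \<Rightarrow> real \<Rightarrow>
    (nat \<Rightarrow> real) \<Rightarrow> real \<Rightarrow> real \<Rightarrow> (nat \<Rightarrow> real) \<Rightarrow> real \<Rightarrow> (nat \<Rightarrow> 'y) \<Rightarrow> 'y \<Rightarrow> bool" where
  "SEML_params K C v0 \<delta> \<theta> \<beta> \<beta>lo \<beta>hi \<gamma> \<epsilon> e ebar \<longleftrightarrow>
     v0 \<in> K \<and> 0 < \<delta> \<and> \<delta> < 1 \<and> 0 < \<theta> \<and> \<theta> < 1 \<and>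
     0 < \<beta>lo \<and> \<beta>lo \<le> \<beta>hi \<and> (\<forall>k. \<beta>lo \<le> \<beta> k \<and> \<beta> k \<le> \<beta>hi) \<and>
     0 < \<epsilon> \<and> \<epsilon> \<le> 1 \<and> (\<forall>k. \<epsilon> \<le> \<gamma> k \<and> \<gamma> k \<le> 1) \<and>
     (\<forall>k. e k \<in> interior C) \<and> e \<longlonglongrightarrow> ebar \<and> ebar \<in> interior C"

definition armijo_fail :: "'y::real_normed_vector set \<Rightarrow> ('e::real_normed_vector \<Rightarrow> 'e \<Rightarrow> 'y) \<Rightarrow>
    ('e \<Rightarrow> real) \<Rightarrow> ('e \<Rightarrow> ('e \<Rightarrow>\<^sub>L real)) \<Rightarrow> real \<Rightarrow> real \<Rightarrow> real \<Rightarrow> 'y \<Rightarrow> 'e \<Rightarrow> 'e \<Rightarrow> nat \<Rightarrow> bool" where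
  "armijo_fail C f g g' \<delta> \<theta> b ek xk zk l \<longleftrightarrow>
     (let yl = \<theta> ^ l *\<^sub>R zk + (1 - \<theta> ^ l) *\<^sub>R xk in
      - (b *\<^sub>R f yl xk) + b *\<^sub>R f yl zk + (\<delta> * Dg g g' zk xk) *\<^sub>R ek \<notin> interior C)"

definition seml_alpha :: "'y::real_normed_vector set \<Rightarrow> ('e::real_normed_vector \<Rightarrow> 'e \<Rightarrow> 'y) \<Rightarrow>
    ('e \<Rightarrow> real) \<Rightarrow> ('e \<Rightarrow> ('e \<Rightarrow>\<^sub>L real)) \<Rightarrow> real \<Rightarrow> real \<Rightarrow> real \<Rightarrow> 'y \<Rightarrow> 'e \<Rightarrow> 'e \<Rightarrow> real" where
  "seml_alpha C f g g' \<delta> \<theta> b ek xk zk = \<theta> ^ (LEAST l. armijo_fail C f g g' \<delta> \<theta> b ek xk zk l)"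

text \<open>T is only defined on K, so every v^j at which T is evaluated lies in K.\<close>
definition SEML_stops_at ::
  "'e::real_normed_vector set \<Rightarrow> ('e \<Rightarrow> 'e set) \<Rightarrow> ('e \<Rightarrow> 'e \<Rightarrow> 'y::real_normed_vector) \<Rightarrow>
   'y set \<Rightarrow> ('e \<Rightarrow> real) \<Rightarrow> ('e \<Rightarrow> ('e \<Rightarrow>\<^sub>L real)) \<Rightarrow> 'e \<Rightarrow> real \<Rightarrow> real \<Rightarrow>
   (nat \<Rightarrow> real) \<Rightarrow> (nat \<Rightarrow> real) \<Rightarrow> (nat \<Rightarrow> 'y) \<Rightarrow>
   (nat \<Rightarrow> 'e) \<Rightarrow> (nat \<Rightarrow> 'e) \<Rightarrow> (nat \<Rightarrow> 'e) \<Rightarrow> (nat \<Rightarrow> 'e) \<Rightarrow> nat \<Rightarrow> bool" where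
  "SEML_stops_at K T f C g g' v0 \<delta> \<theta> \<beta> \<gamma> e v x z w k \<longleftrightarrow>
     (let \<alpha> = (\<lambda>j. seml_alpha C f g g' \<delta> \<theta> (\<beta> j) (e j) (x j) (z j));
          y = (\<lambda>j. \<alpha> j *\<^sub>R z j + (1 - \<alpha> j) *\<^sub>R x j);
          H = (\<lambda>j. {u. - f (y j) u \<in> C});
          Kset = (\<lambda>j. K \<inter> (\<Inter>i\<in>{..j}. H i));
          L = (\<lambda>j. {u. blinfun_apply (g' (x j) - g' (w j)) (u - x j) \<le> - \<gamma> j * Dg g g' (x j) (w j)});
          M = (\<lambda>j. {u. blinfun_apply (g' (v j) - g' (x j)) (u - v j) \<le> - \<gamma> j * Dg g g' (v j) (x j)});
          N = (\<lambda>j. {u. blinfun_apply (g' v0 - g' (v j)) (u - v j) \<le> 0})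
      in v 0 = v0 \<and>
         (\<forall>j\<le>k. v j \<in> K) \<and>
         (\<forall>j\<le>k. is_bproj g g' (T (v j)) (v j) (x j)) \<and>
         (\<forall>j\<le>k. weak_argmin C
                    (\<lambda>u. \<beta> j *\<^sub>R f (x j) u + (g u - blinfun_apply (g' (x j)) u) *\<^sub>R e j)
                    (T (v j)) (z j)) \<and>
         (\<forall>j<k. z j \<noteq> v j) \<and> z k = v k \<and>
         (\<forall>j<k. is_bproj g g' (Kset j) (x j) (w j)) \<and>
         (\<forall>j<k. is_bproj g g' (L j \<inter> M j \<inter> N j) v0 (v (Suc j))))"

end

theory Submission
  imports Defs
begin

(* If the algorithm stops, then v^k = z^k lies in T(v^k), so the Bregman projection x^k of v^k
   onto T(v^k) is v^k itself, and x^k is a fixed point of T. Moreover x^k is then a weak minimizer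
   over T(x^k) of the regularized objective u \<mapsto> \<beta> f(x^k,u) + (g u - g'(x^k) u) e. If some
   u \<in> T(x^k) had f(x^k,u) \<in> -int C, moving from x^k a small step t towards u would decrease
   the first part by order t (C-convexity of f(x^k,.) and f(x^k,x^k) = 0), while the
   regularization grows only by D_g(x^k + t(u - x^k), x^k) = o(t) (Gateaux differentiability),
   contradicting weak minimality. *)

lemma interior_cone_scaleR:
  fixes C :: "'a::real_normed_vector set"
  assumes "cone C" "a \<in> interior C" "t > 0"
  shows "t *\<^sub>R a \<in> interior C"
proof -
  have "(*\<^sub>R) t ` interior C \<subseteq> C"
  proof (rule image_subsetI)
    fix y
    assume "y \<in> interior C"
    then have "y \<in> C"
      using interior_subset by blast
    then show "t *\<^sub>R y \<in> C"
      using assms(1,3) unfolding cone_def by simp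
  qed
  moreover have "open ((*\<^sub>R) t ` interior C)"
    using assms(3) by (intro open_scaling) auto
  ultimately have "(*\<^sub>R) t ` interior C \<subseteq> interior C"
    by (rule interior_maximal)
  then show ?thesis
    using assms(2) by blast
qed

lemma interior_cone_add:
  fixes C :: "'a::real_normed_vector set"
  assumes "cone C" "convex C" "a \<in> interior C" "c \<in> C"
  shows "a + c \<in> interior C"
proof -
  have "(+) c ` interior C \<subseteq> C"
  proof (rule image_subsetI)
    fix y
    assume "y \<in> interior C"
    then show "c + y \<in> C"
      using assms(1,2,4) interior_subset convex_cone by blast
  qed
  moreover have "open ((+) c ` interior C)"
    by (intro open_translation) auto
  ultimately have "(+) c ` interior C \<subseteq> interior C"
    by (rule interior_maximal)
  then show ?thesis
    using assms(3) by (auto simp: add.commute)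
qed

lemma strictly_convex_imp_convex_on:
  assumes "strictly_convex g"
  shows "convex_on UNIV g"
proof
  fix t :: real and x y
  assume "0 < t" "t < 1"
  then show "g ((1 - t) *\<^sub>R x + t *\<^sub>R y) \<le> (1 - t) * g x + t * g y"
    using assms unfolding strictly_convex_def
    by (cases "x = y") (auto simp: algebra_simps intro: less_imp_le)
qed simp

lemma gateaux_deriv_le_chord:
  fixes g :: "'e::real_normed_vector \<Rightarrow> real"
  assumes cvx: "convex_on UNIV g" and gd: "gateaux_deriv g g'"
  shows "blinfun_apply (g' b) (a - b) \<le> g a - g b"
proof -
  have lim: "((\<lambda>t. (g (b + t *\<^sub>R (a - b)) - g b) / t) \<longlongrightarrow> blinfun_apply (g' b) (a - b))
      (at_right 0)"
    using gd unfolding gateaux_deriv_def by (auto intro: tendsto_mono[OF at_le])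
  have ev: "\<forall>\<^sub>F t in at_right (0::real). (g (b + t *\<^sub>R (a - b)) - g b) / t \<le> g a - g b"
    unfolding eventually_at_right_field
  proof (intro exI[of _ 1] conjI allI impI)
    fix t :: real
    assume t: "0 < t" "t < 1"
    have "b + t *\<^sub>R (a - b) = (1 - t) *\<^sub>R b + t *\<^sub>R a"
      by (simp add: algebra_simps)
    then have "g (b + t *\<^sub>R (a - b)) \<le> (1 - t) * g b + t * g a"
      using convex_onD[OF cvx, of t b a] t by simp
    then show "(g (b + t *\<^sub>R (a - b)) - g b) / t \<le> g a - g b"
      using t by (simp add: divide_simps algebra_simps)
  qed simp
  show ?thesis
    by (rule tendsto_le[OF _ tendsto_const lim ev]) simp
qed

lemma Dg_pos:
  assumes sc: "strictly_convex g" and gd: "gateaux_deriv g g'" and "a \<noteq> b"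
  shows "Dg g g' a b > 0"
proof -
  define m where "m = (1/2::real) *\<^sub>R a + (1/2::real) *\<^sub>R b"
  have "g (t *\<^sub>R a + (1 - t) *\<^sub>R b) < t * g a + (1 - t) * g b" if "0 < t" "t < 1" for t
    using sc \<open>a \<noteq> b\<close> that unfolding strictly_convex_def by blast
  from this[of "1/2"] have "g m < (1/2) * g a + (1/2) * g b"
    by (simp add: m_def)
  moreover have "blinfun_apply (g' b) (m - b) \<le> g m - g b"
    using gateaux_deriv_le_chord[OF strictly_convex_imp_convex_on[OF sc] gd] .
  moreover have "m - b = (1/2::real) *\<^sub>R (a - b)"
    by (simp add: m_def algebra_simps flip: scaleR_add_left)
  ultimately show ?thesis
    by (simp add: Dg_def blinfun.scaleR_right)
qed

lemma is_bproj_eq_self: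
  assumes "strictly_convex g" "gateaux_deriv g g'" "is_bproj g g' D x p" "x \<in> D"
  shows "p = x"
proof (rule ccontr)
  assume "p \<noteq> x"
  then have "Dg g g' p x > 0"
    using Dg_pos assms(1,2) by blast
  moreover have "Dg g g' p x \<le> Dg g g' x x"
    using assms(3,4) unfolding is_bproj_def by blast
  ultimately show False
    by (simp add: Dg_def)
qed

lemma tendsto_Dg_ray_quotient:
  assumes "gateaux_deriv g g'"
  shows "((\<lambda>t. Dg g g' (x + t *\<^sub>R h) x / t) \<longlongrightarrow> 0) (at 0)"
proof -
  have "((\<lambda>t. (g (x + t *\<^sub>R h) - g x) / t - blinfun_apply (g' x) h) \<longlongrightarrow> 0) (at 0)"
    using assms unfolding gateaux_deriv_def by (simp add: LIM_zero)
  moreover have "\<forall>\<^sub>F t in at 0. (g (x + t *\<^sub>R h) - g x) / t - blinfun_apply (g' x) h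
      = Dg g g' (x + t *\<^sub>R h) x / t"
    by (auto simp: eventually_at_filter Dg_def blinfun.scaleR_right divide_simps)
  ultimately show ?thesis
    by (rule Lim_transform_eventually)
qed

lemma eventually_Dg_ray_perturbation_in_interior:
  fixes S :: "'a::real_normed_vector set"
  assumes "gateaux_deriv g g'" "a \<in> interior S"
  shows "\<forall>\<^sub>F t in at_right 0. a - (Dg g g' (x + t *\<^sub>R h) x / t) *\<^sub>R e \<in> interior S"
proof (rule topological_tendstoD)
  have "((\<lambda>t. Dg g g' (x + t *\<^sub>R h) x / t) \<longlongrightarrow> 0) (at_right 0)"
    using tendsto_mono[OF at_le[OF subset_UNIV] tendsto_Dg_ray_quotient[OF assms(1)]] .
  then have "((\<lambda>t. a - (Dg g g' (x + t *\<^sub>R h) x / t) *\<^sub>R e) \<longlongrightarrow> a - 0 *\<^sub>R e) (at_right 0)"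
    by (intro tendsto_intros)
  then show "((\<lambda>t. a - (Dg g g' (x + t *\<^sub>R h) x / t) *\<^sub>R e) \<longlongrightarrow> a) (at_right 0)"
    by simp
qed (use assms(2) in auto)

lemma weak_argmin_regularized_imp_no_descent:
  fixes C :: "'y::real_normed_vector set" and f :: "'e::real_normed_vector \<Rightarrow> 'e \<Rightarrow> 'y"
  assumes cone: "cone C" "convex C"
    and gd: "gateaux_deriv g g'"
    and Q: "convex Q" "x \<in> Q"
    and f: "f x x = 0" "C_convex C (f x)"
    and "\<beta> > 0"
    and wmin: "weak_argmin C (\<lambda>u. \<beta> *\<^sub>R f x u + (g u - blinfun_apply (g' x) u) *\<^sub>R e) Q x"
    and "u \<in> Q"
  shows "f x u \<notin> uminus ` interior C"
proof
  assume "f x u \<in> uminus ` interior C"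
  then have "\<beta> *\<^sub>R - f x u \<in> interior C"
    using interior_cone_scaleR[OF cone(1) _ \<open>\<beta> > 0\<close>] by force
  then have "\<forall>\<^sub>F t in at_right 0.
      \<beta> *\<^sub>R - f x u - (Dg g g' (x + t *\<^sub>R (u - x)) x / t) *\<^sub>R e \<in> interior C \<and> 0 < t \<and> t < 1"
    by (intro eventually_conj eventually_Dg_ray_perturbation_in_interior[OF gd])
      (auto simp: eventually_at_right_field intro: exI[of _ 1])
  then obtain t where t: "0 < t" "t < 1"
    and descent: "\<beta> *\<^sub>R - f x u - (Dg g g' (x + t *\<^sub>R (u - x)) x / t) *\<^sub>R e \<in> interior C"
    using eventually_happens[of _ "at_right (0::real)"] by auto
  define ut where "ut = t *\<^sub>R u + (1 - t) *\<^sub>R x"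
  have "ut \<in> Q"
    using convexD[OF Q(1) \<open>u \<in> Q\<close> Q(2), of t "1 - t"] t by (simp add: ut_def)
  have "x + t *\<^sub>R (u - x) = ut"
    by (simp add: ut_def algebra_simps)
  with interior_cone_scaleR[OF cone(1) descent t(1)]
  have "(t * \<beta>) *\<^sub>R - f x u - Dg g g' ut x *\<^sub>R e \<in> interior C"
    using t(1) by (simp add: scaleR_diff_right)
  moreover have "t *\<^sub>R f x u + (1 - t) *\<^sub>R f x x - f x ut \<in> C"
    using f(2) t unfolding C_convex_def ut_def by simp
  then have "\<beta> *\<^sub>R (t *\<^sub>R f x u - f x ut) \<in> C"
    using cone(1) \<open>\<beta> > 0\<close> f(1) unfolding cone_def by simp
  ultimately have "(t * \<beta>) *\<^sub>R - f x u - Dg g g' ut x *\<^sub>R e + \<beta> *\<^sub>R (t *\<^sub>R f x u - f x ut)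
      \<in> interior C"
    by (rule interior_cone_add[OF cone])
  moreover have "(t * \<beta>) *\<^sub>R - f x u - Dg g g' ut x *\<^sub>R e + \<beta> *\<^sub>R (t *\<^sub>R f x u - f x ut)
      = (\<beta> *\<^sub>R f x x + (g x - blinfun_apply (g' x) x) *\<^sub>R e)
      - (\<beta> *\<^sub>R f x ut + (g ut - blinfun_apply (g' x) ut) *\<^sub>R e)"
    by (simp add: f(1) Dg_def algebra_simps blinfun.diff_right)
  ultimately show False
    using wmin \<open>ut \<in> Q\<close> unfolding weak_argmin_def by metis
qed

theorem proposition3p5:
  fixes K :: "'e::banach set"
    and C :: "'y::banach set"
    and f :: "'e \<Rightarrow> 'e \<Rightarrow> 'y"
    and T :: "'e \<Rightarrow> 'e set"
    and g :: "'e \<Rightarrow> real" and g' :: "'e \<Rightarrow> ('e \<Rightarrow>\<^sub>L real)"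
    and v0 :: 'e and \<delta> \<theta> \<beta>lo \<beta>hi \<epsilon> :: real
    and \<beta> \<gamma> :: "nat \<Rightarrow> real" and e :: "nat \<Rightarrow> 'y" and ebar :: 'y
    and v x z w :: "nat \<Rightarrow> 'e" and k :: nat
  assumes K: "K \<noteq> {}" "closed K" "convex K"
    and C: "proper_cone C"
    and T_maps: "\<forall>u\<in>K. T u \<subseteq> K"
    and gF: "class_F g g'"
    and hyps: "H1 g g'" "H2 g g'" "H3 g'" "H4 g"
    and Bs: "B1 f" "B2 f" "B3 C f" "B4 g g' K T"
    and params: "SEML_params K C v0 \<delta> \<theta> \<beta> \<beta>lo \<beta>hi \<gamma> \<epsilon> e ebar"
    and run: "SEML_stops_at K T f C g g' v0 \<delta> \<theta> \<beta> \<gamma> e v x z w k"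
  shows "x k \<in> T (x k) \<and> (\<forall>u\<in>T (x k). f (x k) u \<notin> uminus ` interior C)"
proof -
  have vK: "v k \<in> K" and proj: "is_bproj g g' (T (v k)) (v k) (x k)"
    and wmin: "weak_argmin C (\<lambda>u. \<beta> k *\<^sub>R f (x k) u + (g u - blinfun_apply (g' (x k)) u) *\<^sub>R e k)
      (T (v k)) (z k)"
    and "z k = v k"
    using run unfolding SEML_stops_at_def Let_def by auto
  have sc: "strictly_convex g" and gd: "gateaux_deriv g g'"
    using gF unfolding class_F_def by auto
  have "v k \<in> T (v k)"
    using wmin \<open>z k = v k\<close> unfolding weak_argmin_def by simp
  then have "x k = v k"
    using is_bproj_eq_self[OF sc gd proj] by blast
  then have fixpoint: "x k \<in> T (x k)" and wmin': "weak_argmin C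
      (\<lambda>u. \<beta> k *\<^sub>R f (x k) u + (g u - blinfun_apply (g' (x k)) u) *\<^sub>R e k) (T (x k)) (x k)"
    using \<open>v k \<in> T (v k)\<close> wmin \<open>z k = v k\<close> by simp_all
  have "cone C" "convex C"
    using C unfolding proper_cone_def by simp_all
  moreover have "convex (T (x k))"
    using Bs(4) vK \<open>x k = v k\<close> unfolding B4_def by simp
  moreover have "f (x k) (x k) = 0" "C_convex C (f (x k))"
    using Bs(1,3) unfolding B1_def B3_def by simp_all
  moreover have "\<beta> k > 0"
    using params unfolding SEML_params_def by (meson less_le_trans)
  ultimately have "\<forall>u\<in>T (x k). f (x k) u \<notin> uminus ` interior C"
    using weak_argmin_regularized_imp_no_descent[where f = f and x = "x k", OF _ _ gd _ fixpoint]
      wmin' by blast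
  with fixpoint show ?thesis
    by blast
qed

end
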